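(* Let $P$ be a product rule. The $P$-product is bilinear, associative and commutative if and only if $P$ is simple, i.e. there exist $\alpha,\beta,\gamma\in\mathbb Q$ with $\alpha\gamma=\beta(\beta-1)$ such that \[P(x,\dot x,y,\dot y)\approx \alpha\cdot xy+\beta\cdot(x\dot y+\dot x y)+\gamma\cdot\dot x\dot y.\]
   Context: Let $\Sigma$ be a finite alphabet, $\Sigma^*$ the set of finite words with empty word $\varepsilon$. A series is a function $f:\Sigma^*\to\mathbb Q$; write $f_w=f(w)$; the set of series $\mathbb Q\langle\langle\Sigma\rangle\rangle$ is a $\mathbb Q$-vector space under pointwise operations, with zero series $\mathbb 0$. For $a\in\Sigma$ the left derivative $\delta_a f$ is the series $w\mapsto f(aw)$. Terms: for a set $X$ of variables, $\mathrm{Terms}(X)$ is the set of syntactic terms generated by $u,v::=x\mid 0\mid c\cdot u\mid u+v\mid u*v$ ($x\in X$, $c\in\mathbb Q$); we write $uv$ for $u*v$. A product rule is a term $P\in\mathrm{Terms}(\{x,\dot x,y,\dot y\})$; $P(s_1,s_2,s_3,s_4)$ denotes substitution for $x,\dot x,y,\dot y$. $P$-product: the $P$-product $*$ on series and the semantics $[\![u]\!]_\varrho$ of terms under valuations $\varrho:X\to\mathbb Q\langle\langle\Sigma\rangle\rangle$ are the unique pair with $(f*g)_\varepsilon=f_\varepsilon g_\varepsilon$, $\delta_a(f*g)=[\![P]\!]_{[x\mapsto f,\dot x\mapsto\delta_af,y\mapsto g,\dot y\mapsto\delta_ag]}$ for all $a\in\Sigma$, and $[\![0]\!]_\varrho=\mathbb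 0$, $[\![x]\!]_\varrho=\varrho(x)$, $[\![c\cdot u]\!]_\varrho=c[\![u]\!]_\varrho$, $[\![u+v]\!]_\varrho=[\![u]\!]_\varrho+[\![v]\!]_\varrho$, $[\![u*v]\!]_\varrho=[\![u]\!]_\varrho*[\![v]\!]_\varrho$. BAC means: for all series $f,g,h$ and $c\in\mathbb Q$, $(f+g)*h=f*h+g*h$, $(c f)*g=c(f*g)$, $f*(g*h)=(f*g)*h$, $f*g=g*f$. Term equivalence: $u\approx v$ iff $u,v$ denote the same polynomial in the commutative polynomial ring $\mathbb Q[X]$ when the term constructors are read as polynomial operations. *)

theory Defs
  imports Complex_Main "HOL-Library.Poly_Mapping"
begin

type_synonym 'a series = "'a list \<Rightarrow> rat"

definition lderiv :: "'a \<Rightarrow> 'a series \<Rightarrow> 'a series" where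
  "lderiv a f = (\<lambda>w. f (a # w))"

datatype 'v trm = Var 'v | Zero | Scal rat "'v trm" | Add "'v trm" "'v trm" | Mul "'v trm" "'v trm"

datatype pvar = X | DX | Y | DY

type_synonym prule = "pvar trm"

fun sem :: "('a series \<Rightarrow> 'a series \<Rightarrow> 'a series) \<Rightarrow> ('v \<Rightarrow> 'a series) \<Rightarrow> 'v trm \<Rightarrow> 'a series" where
  "sem mul \<rho> (Var x) = \<rho> x"
| "sem mul \<rho> Zero = (\<lambda>w. 0)"
| "sem mul \<rho> (Scal c u) = (\<lambda>w. c * sem mul \<rho> u w)"
| "sem mul \<rho> (Add u v) = (\<lambda>w. sem mul \<rho> u w + sem mul \<rho> v w)"
| "sem mul \<rho> (Mul u v) = mul (sem mul \<rho> u) (sem mul \<rho> v)"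

definition pval :: "'a series \<Rightarrow> 'a series \<Rightarrow> 'a series \<Rightarrow> 'a series \<Rightarrow> pvar \<Rightarrow> 'a series" where
  "pval f df g dg v = (case v of X \<Rightarrow> f | DX \<Rightarrow> df | Y \<Rightarrow> g | DY \<Rightarrow> dg)"

definition is_P_product :: "prule \<Rightarrow> ('a series \<Rightarrow> 'a series \<Rightarrow> 'a series) \<Rightarrow> bool" where
  "is_P_product P mul \<longleftrightarrow>
     (\<forall>f g. mul f g [] = f [] * g []) \<and>
     (\<forall>f g a. lderiv a (mul f g) = sem mul (pval f (lderiv a f) g (lderiv a g)) P)"

definition pprod :: "prule \<Rightarrow> 'a series \<Rightarrow> 'a series \<Rightarrow> 'a series" where
  "pprod P = (THE mul. is_P_product P mul)"

definition BAC :: "('a series \<Rightarrow> 'a series \<Rightarrow> 'a series) \<Rightarrow> bool" where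
  "BAC mul \<longleftrightarrow>
     (\<forall>f g h. mul (\<lambda>w. f w + g w) h = (\<lambda>w. mul f h w + mul g h w)) \<and>
     (\<forall>(c::rat) f g. mul (\<lambda>w. c * f w) g = (\<lambda>w. c * mul f g w)) \<and>
     (\<forall>f g h. mul f (mul g h) = mul (mul f g) h) \<and>
     (\<forall>f g. mul f g = mul g f)"

(* commutative polynomial ring Q[V], realised as finitely supported maps
   from monomials (finitely supported exponent maps) to coefficients *)
type_synonym 'v mpoly = "('v \<Rightarrow>\<^sub>0 nat) \<Rightarrow>\<^sub>0 rat"

definition pvar_poly :: "'v \<Rightarrow> 'v mpoly" where
  "pvar_poly x = Poly_Mapping.single (Poly_Mapping.single x 1) 1"

fun poly_of :: "'v trm \<Rightarrow> 'v mpoly" where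
  "poly_of (Var x) = pvar_poly x"
| "poly_of Zero = 0"
| "poly_of (Scal c u) = Poly_Mapping.single 0 c * poly_of u"
| "poly_of (Add u v) = poly_of u + poly_of v"
| "poly_of (Mul u v) = poly_of u * poly_of v"

definition term_equiv :: "'v trm \<Rightarrow> 'v trm \<Rightarrow> bool" (infix "\<approx>" 50) where
  "u \<approx> v \<longleftrightarrow> poly_of u = poly_of v"

definition simple :: "prule \<Rightarrow> bool" where
  "simple P \<longleftrightarrow> (\<exists>\<alpha> \<beta> \<gamma> :: rat. \<alpha> * \<gamma> = \<beta> * (\<beta> - 1) \<and>
     P \<approx> Add (Add (Scal \<alpha> (Mul (Var X) (Var Y)))
                  (Scal \<beta> (Add (Mul (Var X) (Var DY)) (Mul (Var DX) (Var Y)))))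
             (Scal \<gamma> (Mul (Var DX) (Var DY))))"

end

(* A P-product is determined by its value at the empty word and by its left derivatives, so it
   exists and is unique.  At a one-letter word it is the rational function
   F(x0, x1, y0, y1) obtained by evaluating P at the values of f, \<delta>f, g, \<delta>g at the empty word.
   Bilinearity and commutativity of the product force
   F = \<alpha> x0 y0 + \<beta> (x0 y1 + x1 y0) + \<gamma> x1 y1, and associativity at the arguments
   (1,0), (1,0), (0,1) forces \<beta>^2 = \<beta> + \<alpha> \<gamma>.  A rational polynomial is determined by its
   values (Kronecker substitution reduces this to one variable), so P is equivalent to the simple
   rule with these coefficients.

   Conversely, for a simple rule S the recursion
   \<delta>(f g) = \<alpha> f g + \<beta> (f \<delta>g + \<delta>f g) + \<gamma> \<delta>f \<delta>g
   gives bilinearity and commutativity by induction on the word, and associativity exactly when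
   \<alpha> \<gamma> = \<beta> (\<beta> - 1).  Terms with the same polynomial evaluate equally in every commutative
   associative algebra, unital or not, so if P \<approx> S then the S-product satisfies the defining
   equations of the P-product and is therefore equal to it. *)

theory Submission
  imports Defs "HOL-Library.Function_Algebras" "HOL-Library.Multiset"
    "HOL-Computational_Algebra.Polynomial"
begin

section \<open>Existence and uniqueness of P-products\<close>

type_synonym 'a series_mul = "'a series \<Rightarrow> 'a series \<Rightarrow> 'a series"

definition eq_upto :: "nat \<Rightarrow> 'a series \<Rightarrow> 'a series \<Rightarrow> bool" where
  "eq_upto L f g \<longleftrightarrow> (\<forall>w. length w \<le> L \<longrightarrow> f w = g w)"

definition mul_eq_upto :: "nat \<Rightarrow> 'a series_mul \<Rightarrow> 'a series_mul \<Rightarrow> bool" where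
  "mul_eq_upto L mul1 mul2 \<longleftrightarrow>
     (\<forall>f g f' g'. eq_upto L f f' \<longrightarrow> eq_upto L g g' \<longrightarrow> eq_upto L (mul1 f g) (mul2 f' g'))"

lemma eq_upto_mono: "eq_upto L f g \<Longrightarrow> L' \<le> L \<Longrightarrow> eq_upto L' f g"
  by (auto simp: eq_upto_def)

lemma sem_eq_upto:
  assumes "mul_eq_upto L mul1 mul2" and "\<And>x. eq_upto L (\<rho>1 x) (\<rho>2 x)"
  shows "eq_upto L (sem mul1 \<rho>1 u) (sem mul2 \<rho>2 u)"
  using assms by (induction u) (auto simp: eq_upto_def mul_eq_upto_def)

definition pstep :: "prule \<Rightarrow> 'a series_mul \<Rightarrow> 'a series_mul" where
  "pstep P mul f g w = (case w of
      [] \<Rightarrow> f [] * g []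
    | a # v \<Rightarrow> sem mul (pval f (lderiv a f) g (lderiv a g)) P v)"

lemma is_P_product_iff_pstep_fixpoint: "is_P_product P mul \<longleftrightarrow> pstep P mul = mul"
proof
  assume "is_P_product P mul"
  then show "pstep P mul = mul"
    by (intro ext) (auto simp: is_P_product_def pstep_def lderiv_def fun_eq_iff split: list.split)
next
  assume fixpoint: "pstep P mul = mul"
  have "mul f g w = pstep P mul f g w" for f g w
    by (simp add: fixpoint)
  then show "is_P_product P mul"
    by (auto simp: is_P_product_def pstep_def lderiv_def)
qed

lemma mul_eq_upto_0_pstep: "mul_eq_upto 0 (pstep P mul1) (pstep P mul2)"
  by (auto simp: mul_eq_upto_def eq_upto_def pstep_def)

lemma mul_eq_upto_Suc_pstep:
  assumes "mul_eq_upto L mul1 mul2"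
  shows "mul_eq_upto (Suc L) (pstep P mul1) (pstep P mul2)"
  unfolding mul_eq_upto_def
proof (intro allI impI)
  fix f g f' g' :: "'a series"
  assume f: "eq_upto (Suc L) f f'" and g: "eq_upto (Suc L) g g'"
  have "eq_upto L (pval f (lderiv a f) g (lderiv a g) x) (pval f' (lderiv a f') g' (lderiv a g') x)"
    for a x
    using f g by (cases x) (auto simp: eq_upto_def pval_def lderiv_def)
  then have "eq_upto L (sem mul1 (pval f (lderiv a f) g (lderiv a g)) P)
                       (sem mul2 (pval f' (lderiv a f') g' (lderiv a g')) P)" for a
    using assms by (intro sem_eq_upto)
  with f g show "eq_upto (Suc L) (pstep P mul1 f g) (pstep P mul2 f' g')"
    by (auto simp: eq_upto_def pstep_def split: list.split)
qed

lemma mul_eq_upto_pstep_iterate: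
  "mul_eq_upto L ((pstep P ^^ Suc L) mul1) ((pstep P ^^ Suc L) mul2)"
  by (induction L) (simp_all add: mul_eq_upto_0_pstep mul_eq_upto_Suc_pstep)

lemma mul_eq_upto_pstep_iterates:
  assumes "L < n" and "L < k"
  shows "mul_eq_upto L ((pstep P ^^ n) mul1) ((pstep P ^^ k) mul2)"
proof -
  have "(pstep P ^^ j) mul = (pstep P ^^ Suc L) ((pstep P ^^ (j - Suc L)) mul)" if "L < j" for j mul
  proof -
    from that have "j = Suc L + (j - Suc L)"
      by simp
    then show ?thesis
      by (metis funpow_add comp_apply)
  qed
  then show ?thesis
    using assms mul_eq_upto_pstep_iterate by metis
qed

lemma P_product_unique:
  assumes "is_P_product P mul1" and "is_P_product P mul2"
  shows "mul1 = mul2"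
proof (intro ext)
  fix f g :: "'a series" and w :: "'a list"
  have "(pstep P ^^ n) mul = mul" if "is_P_product P mul" for mul n
    using that by (induction n) (simp_all add: is_P_product_iff_pstep_fixpoint)
  then have "mul_eq_upto (length w) mul1 mul2"
    using mul_eq_upto_pstep_iterate[of "length w" P mul1 mul2] assms by metis
  then show "mul1 f g w = mul2 f g w"
    by (simp add: mul_eq_upto_def eq_upto_def)
qed

(* The (|w| + 1)-st iterate of pstep, from any starting point, is already correct at w,
   so the product can be taken wordwise from these iterates. *)

lemma P_product_exists: "\<exists>mul. is_P_product P (mul :: 'a series_mul)"
proof
  define prod_lim :: "'a series_mul"
    where "prod_lim f g w = (pstep P ^^ Suc (length w)) undefined f g w" for f g w
  have approx: "mul_eq_upto L prod_lim ((pstep P ^^ Suc L) undefined)" for L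
    unfolding mul_eq_upto_def
  proof (intro allI impI)
    fix f g f' g' :: "'a series"
    assume f: "eq_upto L f f'" and g: "eq_upto L g g'"
    show "eq_upto L (prod_lim f g) ((pstep P ^^ Suc L) undefined f' g')"
      unfolding eq_upto_def
    proof (intro allI impI)
      fix w :: "'a list"
      assume w: "length w \<le> L"
      then have "mul_eq_upto (length w) ((pstep P ^^ Suc (length w)) undefined)
          ((pstep P ^^ Suc L) undefined)"
        by (intro mul_eq_upto_pstep_iterates) auto
      moreover have "eq_upto (length w) f f'" and "eq_upto (length w) g g'"
        using f g w by (auto intro: eq_upto_mono)
      ultimately show "prod_lim f g w = (pstep P ^^ Suc L) undefined f' g' w"
        unfolding prod_lim_def mul_eq_upto_def eq_upto_def by blast
    qed
  qed
  have "mul_eq_upto L (pstep P prod_lim) ((pstep P ^^ Suc L) undefined)" for L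
  proof (cases L)
    case 0
    then show ?thesis by (simp add: mul_eq_upto_0_pstep)
  next
    case (Suc L')
    then show ?thesis using mul_eq_upto_Suc_pstep[OF approx[of L']] by simp
  qed
  then have "pstep P prod_lim f g w = prod_lim f g w" for f g w
    by (auto simp: mul_eq_upto_def eq_upto_def prod_lim_def)
  then show "is_P_product P prod_lim"
    by (simp add: is_P_product_iff_pstep_fixpoint fun_eq_iff)
qed

lemma pprod_is_P_product: "is_P_product P (pprod P)"
  unfolding pprod_def using P_product_exists P_product_unique by (metis theI)

lemma pprod_eqI: "is_P_product P mul \<Longrightarrow> pprod P = mul"
  using pprod_is_P_product P_product_unique by blast

lemma pprod_Nil: "pprod P f g [] = f [] * g []"
  using pprod_is_P_product[of P] unfolding is_P_product_def by blast

lemma pprod_Cons: "pprod P f g (a # w) = sem (pprod P) (pval f (lderiv a f) g (lderiv a g)) P w"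
  using pprod_is_P_product[of P] unfolding is_P_product_def lderiv_def by metis

section \<open>Evaluating polynomials in commutative algebras\<close>

definition monomial_mset :: "('v \<Rightarrow>\<^sub>0 nat) \<Rightarrow> 'v multiset" where
  "monomial_mset m = Abs_multiset (Poly_Mapping.lookup m)"

lemma count_monomial_mset [simp]: "count (monomial_mset m) = Poly_Mapping.lookup m"
proof -
  have "{x. 0 < Poly_Mapping.lookup m x} = Poly_Mapping.keys m"
    by (auto simp: in_keys_iff)
  then show ?thesis
    unfolding monomial_mset_def by (simp add: count_Abs_multiset)
qed

lemma monomial_mset_add: "monomial_mset (m1 + m2) = monomial_mset m1 + monomial_mset m2"
  by (simp add: multiset_eq_iff lookup_add)

lemma monomial_mset_eq_empty_iff: "monomial_mset m = {#} \<longleftrightarrow> m = 0"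
  by (simp add: multiset_eq_iff poly_mapping_eq_iff fun_eq_iff)

lemma monomial_mset_single: "monomial_mset (Poly_Mapping.single v 1) = {#v#}"
  by (simp add: multiset_eq_iff lookup_single when_def)

lemma set_mset_monomial_mset: "set_mset (monomial_mset m) = Poly_Mapping.keys m"
  by (auto simp: set_mset_def in_keys_iff)

lemma poly_mapping_sum_single: "p = (\<Sum>m\<in>Poly_Mapping.keys p. Poly_Mapping.single m (Poly_Mapping.lookup p m))"
  by (rule poly_mapping_eqI) (simp add: lookup_sum lookup_single when_def in_keys_iff)

lemma zero_notin_keys_poly_of: "0 \<notin> Poly_Mapping.keys (poly_of u)"
proof (induction u)
  case (Var x)
  then show ?case
    by (simp add: pvar_poly_def poly_mapping_eq_iff fun_eq_iff lookup_single when_def)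
next
  case (Scal c u)
  then show ?case
    using keys_mult[of "Poly_Mapping.single 0 c" "poly_of u"] by (auto split: if_splits)
next
  case (Add u v)
  then show ?case using keys_add[of "poly_of u" "poly_of v"] by auto
next
  case (Mul u v)
  have "a = 0" if "0 = a + b" for a b :: "'a \<Rightarrow>\<^sub>0 nat"
    using that by (metis add_is_0 lookup_add lookup_zero poly_mapping_eqI)
  with Mul show ?case
    using keys_mult[of "poly_of u" "poly_of v"] by fastforce
qed simp

locale comm_algebra = module scale
  for scale :: "rat \<Rightarrow> 'b::ab_group_add \<Rightarrow> 'b" +
  fixes mul :: "'b \<Rightarrow> 'b \<Rightarrow> 'b"
  assumes mul_add_left: "mul (a + b) c = mul a c + mul b c"
    and mul_scale_left: "mul (scale r a) b = scale r (mul a b)"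
    and mul_commute: "mul a b = mul b a"
    and mul_assoc: "mul (mul a b) c = mul a (mul b c)"
begin

lemma mul_zero_left [simp]: "mul 0 b = 0"
  using mul_add_left[of 0 0 b] by simp

lemma mul_sum_left: "mul (\<Sum>i\<in>I. f i) b = (\<Sum>i\<in>I. mul (f i) b)"
  by (induction I rule: infinite_finite_induct) (simp_all add: mul_add_left)

lemma mul_sum_right: "mul b (\<Sum>i\<in>I. f i) = (\<Sum>i\<in>I. mul b (f i))"
  by (simp add: mul_commute[of b] mul_sum_left)

lemma mul_scale_right: "mul a (scale r b) = scale r (mul a b)"
  by (simp add: mul_commute[of a] mul_scale_left)

fun trm_eval :: "('v \<Rightarrow> 'b) \<Rightarrow> 'v trm \<Rightarrow> 'b" where
  "trm_eval \<rho> (Var x) = \<rho> x"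
| "trm_eval \<rho> Zero = 0"
| "trm_eval \<rho> (Scal c u) = scale c (trm_eval \<rho> u)"
| "trm_eval \<rho> (Add u v) = trm_eval \<rho> u + trm_eval \<rho> v"
| "trm_eval \<rho> (Mul u v) = mul (trm_eval \<rho> u) (trm_eval \<rho> v)"

(* The algebra need not have a unit, so monomials are multiplied out in the monoid obtained by
   adjoining a unit None.  Only the zero monomial gives None, and it evaluates to the junk value 0:
   constant terms are ignored, hence the hypotheses 0 \<notin> keys p below. *)

fun mul_opt :: "'b option \<Rightarrow> 'b option \<Rightarrow> 'b option" where
  "mul_opt None y = y"
| "mul_opt x None = x"
| "mul_opt (Some a) (Some b) = Some (mul a b)"

sublocale opt: comm_monoid_mset mul_opt None
proof
  fix x y z :: "'b option"
  show "mul_opt (mul_opt x y) z = mul_opt x (mul_opt y z)"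
    by (cases x; cases y; cases z) (simp_all add: mul_assoc)
  show "mul_opt x y = mul_opt y x"
    by (cases x; cases y) (simp_all add: mul_commute)
  show "mul_opt x None = x"
    by (cases x) simp_all
qed

lemma opt_F_image_Some_ne_None: "M \<noteq> {#} \<Longrightarrow> opt.F (image_mset Some M) \<noteq> None"
proof (induction M)
  case (add x M)
  show ?case
    by (cases "opt.F (image_mset Some M)") simp_all
qed simp

definition monomial_eval :: "('v \<Rightarrow> 'b) \<Rightarrow> ('v \<Rightarrow>\<^sub>0 nat) \<Rightarrow> 'b" where
  "monomial_eval \<rho> m = (case opt.F (image_mset Some (image_mset \<rho> (monomial_mset m))) of
     None \<Rightarrow> 0 | Some a \<Rightarrow> a)"

lemma monomial_eval_single: "monomial_eval \<rho> (Poly_Mapping.single v 1) = \<rho> v"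
  unfolding monomial_eval_def monomial_mset_single by simp

lemma monomial_eval_add:
  assumes "m1 \<noteq> 0" and "m2 \<noteq> 0"
  shows "monomial_eval \<rho> (m1 + m2) = mul (monomial_eval \<rho> m1) (monomial_eval \<rho> m2)"
proof -
  obtain a1 a2 where "opt.F (image_mset Some (image_mset \<rho> (monomial_mset m1))) = Some a1"
      and "opt.F (image_mset Some (image_mset \<rho> (monomial_mset m2))) = Some a2"
    using assms opt_F_image_Some_ne_None by (metis image_mset_is_empty_iff monomial_mset_eq_empty_iff not_None_eq)
  then show ?thesis
    by (simp add: monomial_eval_def monomial_mset_add)
qed

definition poly_eval :: "('v \<Rightarrow> 'b) \<Rightarrow> (('v \<Rightarrow>\<^sub>0 nat) \<Rightarrow>\<^sub>0 rat) \<Rightarrow> 'b" where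
  "poly_eval \<rho> p = (\<Sum>m\<in>Poly_Mapping.keys p. scale (Poly_Mapping.lookup p m) (monomial_eval \<rho> m))"

lemma poly_eval_superset:
  assumes "finite S" and "Poly_Mapping.keys p \<subseteq> S"
  shows "poly_eval \<rho> p = (\<Sum>m\<in>S. scale (Poly_Mapping.lookup p m) (monomial_eval \<rho> m))"
  unfolding poly_eval_def
  by (rule sum.mono_neutral_left) (use assms in \<open>auto simp: in_keys_iff\<close>)

lemma poly_eval_zero [simp]: "poly_eval \<rho> 0 = 0"
  by (simp add: poly_eval_def)

lemma poly_eval_add: "poly_eval \<rho> (p + q) = poly_eval \<rho> p + poly_eval \<rho> q"
proof -
  let ?S = "Poly_Mapping.keys p \<union> Poly_Mapping.keys q"
  have "poly_eval \<rho> (p + q) = (\<Sum>m\<in>?S. scale (Poly_Mapping.lookup (p + q) m) (monomial_eval \<rho> m))"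
    by (rule poly_eval_superset) (auto simp: keys_add)
  also have "\<dots> = poly_eval \<rho> p + poly_eval \<rho> q"
    by (simp add: lookup_add scale_left_distrib sum.distrib poly_eval_superset[of ?S])
  finally show ?thesis .
qed

lemma poly_eval_sum: "poly_eval \<rho> (\<Sum>i\<in>I. f i) = (\<Sum>i\<in>I. poly_eval \<rho> (f i))"
  by (induction I rule: infinite_finite_induct) (simp_all add: poly_eval_add)

lemma poly_eval_single: "poly_eval \<rho> (Poly_Mapping.single m c) = scale c (monomial_eval \<rho> m)"
  by (simp add: poly_eval_def)

lemma poly_eval_scale: "poly_eval \<rho> (Poly_Mapping.single 0 c * p) = scale c (poly_eval \<rho> p)"
proof -
  have "Poly_Mapping.single 0 c * p
      = (\<Sum>m\<in>Poly_Mapping.keys p. Poly_Mapping.single m (c * Poly_Mapping.lookup p m))"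
    by (subst poly_mapping_sum_single[of p]) (simp add: sum_distrib_left mult_single)
  then have "poly_eval \<rho> (Poly_Mapping.single 0 c * p)
      = (\<Sum>m\<in>Poly_Mapping.keys p. scale (c * Poly_Mapping.lookup p m) (monomial_eval \<rho> m))"
    by (simp add: poly_eval_sum poly_eval_single)
  then show ?thesis
    by (simp add: poly_eval_def scale_sum_right)
qed

lemma poly_eval_mult:
  assumes "0 \<notin> Poly_Mapping.keys p" and "0 \<notin> Poly_Mapping.keys q"
  shows "poly_eval \<rho> (p * q) = mul (poly_eval \<rho> p) (poly_eval \<rho> q)"
proof -
  have "p * q = (\<Sum>m1\<in>Poly_Mapping.keys p. \<Sum>m2\<in>Poly_Mapping.keys q.
      Poly_Mapping.single (m1 + m2) (Poly_Mapping.lookup p m1 * Poly_Mapping.lookup q m2))"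
    by (subst poly_mapping_sum_single[of p], subst poly_mapping_sum_single[of q])
      (simp add: sum_distrib_left sum_distrib_right mult_single, rule sum.swap)
  also have "poly_eval \<rho> \<dots> = (\<Sum>m1\<in>Poly_Mapping.keys p. \<Sum>m2\<in>Poly_Mapping.keys q.
      mul (scale (Poly_Mapping.lookup p m1) (monomial_eval \<rho> m1))
          (scale (Poly_Mapping.lookup q m2) (monomial_eval \<rho> m2)))"
    unfolding poly_eval_sum
  proof (intro sum.cong refl)
    fix m1 m2
    assume "m1 \<in> Poly_Mapping.keys p" and "m2 \<in> Poly_Mapping.keys q"
    with assms have "m1 \<noteq> 0" and "m2 \<noteq> 0"
      by auto
    then show "poly_eval \<rho> (Poly_Mapping.single (m1 + m2) (Poly_Mapping.lookup p m1 * Poly_Mapping.lookup q m2))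
        = mul (scale (Poly_Mapping.lookup p m1) (monomial_eval \<rho> m1))
              (scale (Poly_Mapping.lookup q m2) (monomial_eval \<rho> m2))"
      by (simp add: poly_eval_single monomial_eval_add mul_scale_left mul_scale_right mult.commute)
  qed
  also have "\<dots> = mul (poly_eval \<rho> p) (poly_eval \<rho> q)"
    by (simp only: poly_eval_def mul_sum_left) (simp only: mul_sum_right)
  finally show ?thesis .
qed

lemma poly_eval_pvar_poly: "poly_eval \<rho> (pvar_poly x) = \<rho> x"
  by (simp only: pvar_poly_def poly_eval_single monomial_eval_single scale_one)

lemma poly_eval_poly_of: "poly_eval \<rho> (poly_of u) = trm_eval \<rho> u"
  by (induction u)
    (simp_all add: poly_eval_pvar_poly poly_eval_scale
      poly_eval_add poly_eval_mult zero_notin_keys_poly_of)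

lemma trm_eval_term_equiv: "u \<approx> v \<Longrightarrow> trm_eval \<rho> u = trm_eval \<rho> v"
  by (metis poly_eval_poly_of term_equiv_def)

end

section \<open>Rational polynomials are determined by their values\<close>

interpretation rat_algebra: comm_algebra "(*) :: rat \<Rightarrow> rat \<Rightarrow> rat" "(*)"
  by unfold_locales (simp_all add: algebra_simps)

(* On rat this simp rule reads a * (b * x) = a * b * x and loops against mult.assoc. *)
declare rat_algebra.scale_scale [simp del]

lemma rat_algebra_opt_F: "M \<noteq> {#} \<Longrightarrow> rat_algebra.opt.F (image_mset Some M) = Some (prod_mset M)"
proof (induction M)
  case (add x M)
  then show ?case
    by (cases "M = {#}") auto
qed simp

lemma rat_algebra_monomial_eval:
  assumes "m \<noteq> 0"
  shows "rat_algebra.monomial_eval \<rho> m = (\<Prod>v\<in>Poly_Mapping.keys m. \<rho> v ^ Poly_Mapping.lookup m v)"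
  using assms
  by (simp add: rat_algebra.monomial_eval_def rat_algebra_opt_F monomial_mset_eq_empty_iff
      image_prod_mset_multiplicity set_mset_monomial_mset)

lemma base_expansion_unique:
  fixes d d' :: "nat \<Rightarrow> nat"
  assumes "\<And>i. i < K \<Longrightarrow> d i < N" and "\<And>i. i < K \<Longrightarrow> d' i < N"
    and "(\<Sum>i<K. d i * N ^ i) = (\<Sum>i<K. d' i * N ^ i)"
  shows "\<forall>i<K. d i = d' i"
  using assms
proof (induction K arbitrary: d d')
  case (Suc K)
  have split: "(\<Sum>i<Suc K. e i * N ^ i) = e 0 + N * (\<Sum>i<K. e (Suc i) * N ^ i)" for e :: "nat \<Rightarrow> nat"
    unfolding sum.lessThan_Suc_shift by (simp add: sum_distrib_left ac_simps)
  have digits: "(e 0 + N * (\<Sum>i<K. e (Suc i) * N ^ i)) mod N = e 0"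
      "(e 0 + N * (\<Sum>i<K. e (Suc i) * N ^ i)) div N = (\<Sum>i<K. e (Suc i) * N ^ i)"
    if "e 0 < N" for e :: "nat \<Rightarrow> nat"
    using that by simp_all
  have "d 0 = d' 0 \<and> (\<Sum>i<K. d (Suc i) * N ^ i) = (\<Sum>i<K. d' (Suc i) * N ^ i)"
    using Suc.prems digits[of d] digits[of d'] unfolding split by (metis zero_less_Suc)
  moreover have "\<forall>i<K. d (Suc i) = d' (Suc i)"
    using calculation Suc.prems by (intro Suc.IH) auto
  ultimately show ?case
    by (auto simp: less_Suc_eq_0_disj)
qed simp

lemma inj_on_base_encoding:
  fixes M :: "('v \<Rightarrow>\<^sub>0 nat) set"
  assumes h: "bij_betw h {..<K} V"
    and keys: "\<And>m. m \<in> M \<Longrightarrow> Poly_Mapping.keys m \<subseteq> V"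
    and small: "\<And>m v. m \<in> M \<Longrightarrow> Poly_Mapping.lookup m v < N"
  shows "inj_on (\<lambda>m. \<Sum>i<K. Poly_Mapping.lookup m (h i) * N ^ i) M"
proof (rule inj_onI)
  fix m m'
  assume m: "m \<in> M" and m': "m' \<in> M"
    and eq: "(\<Sum>i<K. Poly_Mapping.lookup m (h i) * N ^ i) = (\<Sum>i<K. Poly_Mapping.lookup m' (h i) * N ^ i)"
  have digits: "\<forall>i<K. Poly_Mapping.lookup m (h i) = Poly_Mapping.lookup m' (h i)"
    by (rule base_expansion_unique[where d = "\<lambda>i. Poly_Mapping.lookup m (h i)"
          and d' = "\<lambda>i. Poly_Mapping.lookup m' (h i)"]) (use small m m' eq in auto)
  show "m = m'"
  proof (rule poly_mapping_eqI)
    fix v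
    show "Poly_Mapping.lookup m v = Poly_Mapping.lookup m' v"
    proof (cases "v \<in> V")
      case True
      then obtain i where "i < K" and "v = h i"
        using h by (auto simp: bij_betw_def)
      then show ?thesis
        using digits by simp
    next
      case False
      then show ?thesis
        using keys[OF m] keys[OF m'] by (metis in_keys_iff subsetD)
    qed
  qed
qed

lemma rat_algebra_monomial_eval_base_subst:
  assumes h: "bij_betw h {..<K} V" and "Poly_Mapping.keys m \<subseteq> V" and "m \<noteq> 0"
  shows "rat_algebra.monomial_eval (\<lambda>v. t ^ N ^ inv_into {..<K} h v) m
      = t ^ (\<Sum>i<K. Poly_Mapping.lookup m (h i) * N ^ i)"
proof -
  let ?idx = "inv_into {..<K} h"
  have "rat_algebra.monomial_eval (\<lambda>v. t ^ N ^ ?idx v) m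
      = (\<Prod>v\<in>Poly_Mapping.keys m. t ^ (Poly_Mapping.lookup m v * N ^ ?idx v))"
    using \<open>m \<noteq> 0\<close> by (simp add: rat_algebra_monomial_eval power_mult[symmetric] mult.commute)
  also have "\<dots> = t ^ (\<Sum>v\<in>Poly_Mapping.keys m. Poly_Mapping.lookup m v * N ^ ?idx v)"
    by (simp add: power_sum)
  also have "(\<Sum>v\<in>Poly_Mapping.keys m. Poly_Mapping.lookup m v * N ^ ?idx v)
      = (\<Sum>v\<in>V. Poly_Mapping.lookup m v * N ^ ?idx v)"
    using assms bij_betw_finite by (intro sum.mono_neutral_left) (auto simp: in_keys_iff)
  also have "\<dots> = (\<Sum>i<K. Poly_Mapping.lookup m (h i) * N ^ ?idx (h i))"
    by (rule sum.reindex_bij_betw[OF h, symmetric])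
  also have "\<dots> = (\<Sum>i<K. Poly_Mapping.lookup m (h i) * N ^ i)"
    using h by (auto simp: bij_betw_def inv_into_f_f intro!: sum.cong)
  finally show ?thesis .
qed

lemma kronecker_substitution:
  fixes M :: "('v \<Rightarrow>\<^sub>0 nat) set"
  assumes "finite M" and "0 \<notin> M"
  obtains enc :: "('v \<Rightarrow>\<^sub>0 nat) \<Rightarrow> nat" and \<rho> :: "rat \<Rightarrow> 'v \<Rightarrow> rat"
  where "inj_on enc M" and "\<And>t m. m \<in> M \<Longrightarrow> rat_algebra.monomial_eval (\<rho> t) m = t ^ enc m"
proof -
  define V where "V = \<Union> (Poly_Mapping.keys ` M)"
  have "finite V"
    using assms(1) by (simp add: V_def)
  then obtain h where h: "bij_betw h {..<card V} V"
    using ex_bij_betw_nat_finite atLeast0LessThan by metis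
  define N where "N = Suc (\<Sum>m\<in>M. \<Sum>v\<in>Poly_Mapping.keys m. Poly_Mapping.lookup m v)"
  have small: "Poly_Mapping.lookup m v < N" if "m \<in> M" for m v
  proof (cases "v \<in> Poly_Mapping.keys m")
    case True
    have "Poly_Mapping.lookup m v \<le> (\<Sum>v\<in>Poly_Mapping.keys m. Poly_Mapping.lookup m v)"
      using True by (intro member_le_sum) auto
    also have "\<dots> \<le> (\<Sum>m\<in>M. \<Sum>v\<in>Poly_Mapping.keys m. Poly_Mapping.lookup m v)"
      using that assms(1) by (intro member_le_sum) auto
    finally show ?thesis
      by (simp add: N_def)
  qed (simp add: N_def in_keys_iff)
  define enc where "enc m = (\<Sum>i<card V. Poly_Mapping.lookup m (h i) * N ^ i)" for m
  define \<rho> where "\<rho> t v = t ^ N ^ inv_into {..<card V} h v" for t :: rat and v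
  have "inj_on enc M"
    unfolding enc_def by (rule inj_on_base_encoding[OF h]) (auto simp: V_def small)
  moreover have "rat_algebra.monomial_eval (\<rho> t) m = t ^ enc m" if "m \<in> M" for t m
    unfolding \<rho>_def enc_def
    using that assms(2) by (intro rat_algebra_monomial_eval_base_subst[OF h]) (auto simp: V_def)
  ultimately show ?thesis
    using that by blast
qed

lemma rat_poly_eval_eq_0_imp_0:
  fixes q :: "('v \<Rightarrow>\<^sub>0 nat) \<Rightarrow>\<^sub>0 rat"
  assumes vanish: "\<And>\<rho>. rat_algebra.poly_eval \<rho> q = 0" and "0 \<notin> Poly_Mapping.keys q"
  shows "q = 0"
proof -
  obtain enc \<rho> where inj: "inj_on enc (Poly_Mapping.keys q)"
    and mono: "\<And>t m. m \<in> Poly_Mapping.keys q \<Longrightarrow> rat_algebra.monomial_eval (\<rho> t) m = t ^ enc m"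
    using kronecker_substitution[OF finite_keys assms(2)] by blast
  define Q where "Q = (\<Sum>m\<in>Poly_Mapping.keys q. monom (Poly_Mapping.lookup q m) (enc m))"
  have "poly Q t = rat_algebra.poly_eval (\<rho> t) q" for t
    unfolding Q_def poly_sum poly_monom rat_algebra.poly_eval_def
    by (intro sum.cong) (simp_all add: mono)
  then have "Q = 0"
    using vanish poly_all_0_iff_0 by metis
  have "Poly_Mapping.lookup q m = coeff Q (enc m)" if "m \<in> Poly_Mapping.keys q" for m
  proof -
    have "coeff Q (enc m) = (\<Sum>m'\<in>Poly_Mapping.keys q. if m' = m then Poly_Mapping.lookup q m' else 0)"
      unfolding Q_def coeff_sum coeff_monom
      using inj that by (intro sum.cong refl) (auto simp: inj_on_eq_iff)
    then show ?thesis
      using that by simp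
  qed
  then have "Poly_Mapping.lookup q m = 0" for m
    using \<open>Q = 0\<close> by (cases "m \<in> Poly_Mapping.keys q") (simp_all add: in_keys_iff)
  then show "q = 0"
    by (simp add: poly_mapping_eqI)
qed

lemma term_equiv_if_rat_eval_eq:
  assumes "\<And>\<rho>. rat_algebra.trm_eval \<rho> u = rat_algebra.trm_eval \<rho> v"
  shows "u \<approx> v"
proof -
  define q where "q = poly_of u - poly_of v"
  have "rat_algebra.poly_eval \<rho> q = 0" for \<rho>
    using rat_algebra.poly_eval_add[of \<rho> q "poly_of v"] assms[of \<rho>]
    by (simp add: q_def rat_algebra.poly_eval_poly_of)
  moreover have "0 \<notin> Poly_Mapping.keys q"
    using zero_notin_keys_poly_of[of u] zero_notin_keys_poly_of[of v]
    by (simp add: q_def in_keys_iff lookup_minus)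
  ultimately have "q = 0"
    by (rule rat_poly_eval_eq_0_imp_0)
  then show ?thesis
    by (simp add: q_def term_equiv_def)
qed

section \<open>Simple product rules give bilinear, associative, commutative products\<close>

definition simple_rule :: "rat \<Rightarrow> rat \<Rightarrow> rat \<Rightarrow> prule" where
  "simple_rule \<alpha> \<beta> \<gamma> = Add (Add (Scal \<alpha> (Mul (Var X) (Var Y)))
                  (Scal \<beta> (Add (Mul (Var X) (Var DY)) (Mul (Var DX) (Var Y)))))
             (Scal \<gamma> (Mul (Var DX) (Var DY)))"

lemma simple_iff_simple_rule:
  "simple P \<longleftrightarrow> (\<exists>\<alpha> \<beta> \<gamma>. \<alpha> * \<gamma> = \<beta> * (\<beta> - 1) \<and> P \<approx> simple_rule \<alpha> \<beta> \<gamma>)"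
  by (simp add: simple_def simple_rule_def)

lemma lderiv_add: "lderiv a (\<lambda>w. f w + g w) = (\<lambda>w. lderiv a f w + lderiv a g w)"
  by (simp add: lderiv_def)

lemma lderiv_scale: "lderiv a (\<lambda>w. c * f w) = (\<lambda>w. c * lderiv a f w)"
  by (simp add: lderiv_def)

lemma sem_simple_rule: "sem mul \<rho> (simple_rule \<alpha> \<beta> \<gamma>) = (\<lambda>w. \<alpha> * mul (\<rho> X) (\<rho> Y) w
    + \<beta> * (mul (\<rho> X) (\<rho> DY) w + mul (\<rho> DX) (\<rho> Y) w) + \<gamma> * mul (\<rho> DX) (\<rho> DY) w)"
  by (simp add: simple_rule_def)

locale simple_product =
  fixes \<alpha> \<beta> \<gamma> :: rat
begin

abbreviation smul :: "'a series_mul" where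
  "smul \<equiv> pprod (simple_rule \<alpha> \<beta> \<gamma>)"

lemma smul_Cons: "smul f g (a # w) = \<alpha> * smul f g w
    + \<beta> * (smul f (lderiv a g) w + smul (lderiv a f) g w) + \<gamma> * smul (lderiv a f) (lderiv a g) w"
  by (simp add: pprod_Cons sem_simple_rule pval_def)

lemma lderiv_smul: "lderiv a (smul f g) = (\<lambda>w. \<alpha> * smul f g w
    + \<beta> * (smul f (lderiv a g) w + smul (lderiv a f) g w) + \<gamma> * smul (lderiv a f) (lderiv a g) w)"
  by (simp add: lderiv_def smul_Cons)

lemma smul_add_left: "smul (\<lambda>w. f1 w + f2 w) g = (\<lambda>w. smul f1 g w + smul f2 g w)"
proof
  show "smul (\<lambda>w. f1 w + f2 w) g w = smul f1 g w + smul f2 g w" for w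
  proof (induction w arbitrary: f1 f2 g)
    case Nil
    then show ?case by (simp add: pprod_Nil algebra_simps)
  next
    case (Cons a w)
    show ?case
      by (simp add: smul_Cons lderiv_add Cons.IH algebra_simps)
  qed
qed

lemma smul_scale_left: "smul (\<lambda>w. c * f w) g = (\<lambda>w. c * smul f g w)"
proof
  show "smul (\<lambda>w. c * f w) g w = c * smul f g w" for w
  proof (induction w arbitrary: f g)
    case Nil
    then show ?case by (simp add: pprod_Nil)
  next
    case (Cons a w)
    show ?case
      by (simp add: smul_Cons lderiv_scale Cons.IH algebra_simps)
  qed
qed

lemma smul_commute: "smul f g = smul g f"
proof
  show "smul f g w = smul g f w" for w
  proof (induction w arbitrary: f g)
    case Nil
    then show ?case by (simp add: pprod_Nil)
  next
    case (Cons a w)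
    show ?case
      by (simp only: smul_Cons Cons.IH[of f] Cons.IH[of "lderiv a f"]) (simp add: add_ac)
  qed
qed

lemma smul_add_right: "smul f (\<lambda>w. g1 w + g2 w) = (\<lambda>w. smul f g1 w + smul f g2 w)"
  by (simp add: smul_commute[of f] smul_add_left)

lemma smul_scale_right: "smul f (\<lambda>w. c * g w) = (\<lambda>w. c * smul f g w)"
  by (simp add: smul_commute[of f] smul_scale_left)

lemma smul_assoc:
  assumes "\<alpha> * \<gamma> = \<beta> * (\<beta> - 1)"
  shows "smul f (smul g h) = smul (smul f g) h"
proof
  show "smul f (smul g h) w = smul (smul f g) h w" for w
  proof (induction w arbitrary: f g h)
    case Nil
    then show ?case by (simp add: pprod_Nil)
  next
    case (Cons a w)
    (* After one step the coefficient of \<delta>f g h is \<beta> + \<alpha> \<gamma> on the left and \<beta>^2 on the right,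
       and the other way round for f g \<delta>h; all other coefficients agree. *)
    show ?case
      by (simp only: smul_Cons lderiv_smul smul_add_left smul_add_right smul_scale_left
          smul_scale_right Cons.IH) (use assms in algebra)
  qed
qed

lemma BAC_smul:
  assumes "\<alpha> * \<gamma> = \<beta> * (\<beta> - 1)"
  shows "BAC smul"
  unfolding BAC_def
  by (intro conjI allI smul_add_left smul_scale_left smul_commute smul_assoc[OF assms])

end

lemma sem_eq_if_term_equiv:
  assumes "BAC mul" and "u \<approx> v"
  shows "sem mul \<rho> u = sem mul \<rho> v"
proof -
  interpret series: comm_algebra "\<lambda>c f w. c * f w" mul
  proof
    fix f g h :: "'a series" and c d :: rat
    show "(\<lambda>w. c * (f + g) w) = (\<lambda>w. c * f w) + (\<lambda>w. c * g w)"
      and "(\<lambda>w. (c + d) * f w) = (\<lambda>w. c * f w) + (\<lambda>w. d * f w)"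
      by (simp_all add: plus_fun_def distrib_left distrib_right)
    show "(\<lambda>w. c * (d * f w)) = (\<lambda>w. c * d * f w)" and "(\<lambda>w. 1 * f w) = f"
      by (simp_all add: mult.assoc)
    show "mul (f + g) h = mul f h + mul g h" and "mul (\<lambda>w. c * f w) g = (\<lambda>w. c * mul f g w)"
      and "mul f g = mul g f" and "mul (mul f g) h = mul f (mul g h)"
      using assms(1) unfolding BAC_def plus_fun_def by metis+
  qed
  have "sem mul \<rho> t = series.trm_eval \<rho> t" for t
    by (induction t) (simp_all add: plus_fun_def zero_fun_def)
  then show ?thesis
    using series.trm_eval_term_equiv[OF assms(2)] by simp
qed

lemma pprod_eq_if_term_equiv:
  assumes "BAC (pprod Q :: 'a series_mul)" and "P \<approx> Q"
  shows "pprod P = (pprod Q :: 'a series_mul)"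
proof (rule pprod_eqI)
  have "Q \<approx> P"
    using assms(2) by (simp add: term_equiv_def)
  then have "sem (pprod Q) \<rho> Q = sem (pprod Q :: 'a series_mul) \<rho> P" for \<rho>
    by (rule sem_eq_if_term_equiv[OF assms(1)])
  moreover have "is_P_product Q (pprod Q :: 'a series_mul)"
    by (rule pprod_is_P_product)
  ultimately show "is_P_product P (pprod Q :: 'a series_mul)"
    by (simp add: is_P_product_def)
qed

lemma simple_imp_BAC:
  assumes "simple P"
  shows "BAC (pprod P :: 'a series_mul)"
proof -
  obtain \<alpha> \<beta> \<gamma> where "\<alpha> * \<gamma> = \<beta> * (\<beta> - 1)" and "P \<approx> simple_rule \<alpha> \<beta> \<gamma>"
    using assms by (auto simp: simple_iff_simple_rule)
  then show ?thesis
    using simple_product.BAC_smul pprod_eq_if_term_equiv by metis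
qed

section \<open>Bilinear, associative, commutative P-products come from simple rules\<close>

lemma sem_Nil:
  assumes "\<And>f g. mul f g [] = f [] * g []"
  shows "sem mul \<rho> u [] = rat_algebra.trm_eval (\<lambda>x. \<rho> x []) u"
  by (induction u) (simp_all add: assms)

definition rule_fun :: "prule \<Rightarrow> rat \<Rightarrow> rat \<Rightarrow> rat \<Rightarrow> rat \<Rightarrow> rat" where
  "rule_fun P x0 x1 y0 y1 =
     rat_algebra.trm_eval (\<lambda>v. case v of X \<Rightarrow> x0 | DX \<Rightarrow> x1 | Y \<Rightarrow> y0 | DY \<Rightarrow> y1) P"

lemma pprod_singleton: "pprod P f g [a] = rule_fun P (f []) (f [a]) (g []) (g [a])"
proof -
  have "(\<lambda>x. pval f (lderiv a f) g (lderiv a g) x []) =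
      (\<lambda>v. case v of X \<Rightarrow> f [] | DX \<Rightarrow> f [a] | Y \<Rightarrow> g [] | DY \<Rightarrow> g [a])"
    by (auto simp: pval_def lderiv_def split: pvar.split)
  then show ?thesis
    by (simp add: pprod_Cons sem_Nil pprod_Nil rule_fun_def)
qed

definition two_valued :: "rat \<Rightarrow> rat \<Rightarrow> 'a series" where
  "two_valued x0 x1 = (\<lambda>w. if w = [] then x0 else x1)"

lemma BAC_imp_rule_fun_laws:
  assumes "BAC (pprod P :: 'a series_mul)"
  shows "rule_fun P (x0 + x0') (x1 + x1') y0 y1 = rule_fun P x0 x1 y0 y1 + rule_fun P x0' x1' y0 y1"
    and "rule_fun P (c * x0) (c * x1) y0 y1 = c * rule_fun P x0 x1 y0 y1"
    and "rule_fun P x0 x1 y0 y1 = rule_fun P y0 y1 x0 x1"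
    and "rule_fun P x0 x1 (y0 * z0) (rule_fun P y0 y1 z0 z1)
       = rule_fun P (x0 * y0) (rule_fun P x0 x1 y0 y1) z0 z1"
proof -
  let ?mul = "pprod P :: 'a series_mul"
  let ?at = "\<lambda>f. f [undefined :: 'a]"
  have bac: "?mul (\<lambda>w. f w + g w) h = (\<lambda>w. ?mul f h w + ?mul g h w)"
      "?mul (\<lambda>w. c * f w) g = (\<lambda>w. c * ?mul f g w)"
      "?mul f (?mul g h) = ?mul (?mul f g) h"
      "?mul f g = ?mul g f" for f g h c
    using assms unfolding BAC_def by blast+
  show "rule_fun P (x0 + x0') (x1 + x1') y0 y1 = rule_fun P x0 x1 y0 y1 + rule_fun P x0' x1' y0 y1"
    using arg_cong[OF bac(1)[of "two_valued x0 x1" "two_valued x0' x1'" "two_valued y0 y1"], of ?at]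
    by (simp add: pprod_singleton two_valued_def)
  show "rule_fun P (c * x0) (c * x1) y0 y1 = c * rule_fun P x0 x1 y0 y1"
    using arg_cong[OF bac(2)[of c "two_valued x0 x1" "two_valued y0 y1"], of ?at]
    by (simp add: pprod_singleton two_valued_def)
  show "rule_fun P x0 x1 y0 y1 = rule_fun P y0 y1 x0 x1"
    using arg_cong[OF bac(4)[of "two_valued x0 x1" "two_valued y0 y1"], of ?at]
    by (simp add: pprod_singleton two_valued_def)
  show "rule_fun P x0 x1 (y0 * z0) (rule_fun P y0 y1 z0 z1)
      = rule_fun P (x0 * y0) (rule_fun P x0 x1 y0 y1) z0 z1"
    using arg_cong[OF bac(3)[of "two_valued x0 x1" "two_valued y0 y1" "two_valued z0 z1"], of ?at]
    by (simp add: pprod_singleton pprod_Nil two_valued_def)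
qed

lemma symmetric_bilinear_form:
  fixes F :: "rat \<Rightarrow> rat \<Rightarrow> rat \<Rightarrow> rat \<Rightarrow> rat"
  assumes add: "\<And>x0 x1 x0' x1' y0 y1. F (x0 + x0') (x1 + x1') y0 y1 = F x0 x1 y0 y1 + F x0' x1' y0 y1"
    and scale: "\<And>c x0 x1 y0 y1. F (c * x0) (c * x1) y0 y1 = c * F x0 x1 y0 y1"
    and comm: "\<And>x0 x1 y0 y1. F x0 x1 y0 y1 = F y0 y1 x0 x1"
  shows "F x0 x1 y0 y1 = F 1 0 1 0 * x0 * y0 + F 1 0 0 1 * (x0 * y1 + x1 * y0) + F 0 1 0 1 * x1 * y1"
proof -
  have lin: "F x0 x1 y0 y1 = x0 * F 1 0 y0 y1 + x1 * F 0 1 y0 y1" for x0 x1 y0 y1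
    using add[of "x0 * 1" "x1 * 0" "x0 * 0" "x1 * 1" y0 y1] scale[of x0 1 0 y0 y1] scale[of x1 0 1 y0 y1]
    by simp
  have "F 1 0 y0 y1 = F y0 y1 1 0"
    by (rule comm)
  also have "\<dots> = y0 * F 1 0 1 0 + y1 * F 0 1 1 0"
    by (rule lin)
  also have "F 0 1 1 0 = F 1 0 0 1"
    by (rule comm)
  finally have "F 1 0 y0 y1 = y0 * F 1 0 1 0 + y1 * F 1 0 0 1" .
  moreover have "F 0 1 y0 y1 = y0 * F 1 0 0 1 + y1 * F 0 1 0 1"
    using comm[of 0 1 y0 y1] lin[of y0 y1 0 1] by simp
  ultimately show ?thesis
    using lin[of x0 x1 y0 y1] by (simp add: algebra_simps)
qed

lemma BAC_imp_simple:
  assumes "BAC (pprod P :: 'a series_mul)"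
  shows "simple P"
proof -
  define \<alpha> \<beta> \<gamma>
    where "\<alpha> = rule_fun P 1 0 1 0" and "\<beta> = rule_fun P 1 0 0 1" and "\<gamma> = rule_fun P 0 1 0 1"
  have form: "rule_fun P x0 x1 y0 y1 = \<alpha> * x0 * y0 + \<beta> * (x0 * y1 + x1 * y0) + \<gamma> * x1 * y1"
    for x0 x1 y0 y1
    unfolding \<alpha>_def \<beta>_def \<gamma>_def
    by (rule symmetric_bilinear_form) (use BAC_imp_rule_fun_laws[OF assms] in blast)+
  have "\<alpha> * \<gamma> = \<beta> * (\<beta> - 1)"
    using BAC_imp_rule_fun_laws(4)[OF assms, of 1 0 1 0 0 1] by (simp add: form algebra_simps)
  moreover have "P \<approx> simple_rule \<alpha> \<beta> \<gamma>"
  proof (rule term_equiv_if_rat_eval_eq)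
    fix \<rho> :: "pvar \<Rightarrow> rat"
    have "\<rho> = (\<lambda>v. case v of X \<Rightarrow> \<rho> X | DX \<Rightarrow> \<rho> DX | Y \<Rightarrow> \<rho> Y | DY \<Rightarrow> \<rho> DY)"
      by (auto split: pvar.split)
    then have "rat_algebra.trm_eval \<rho> P = rule_fun P (\<rho> X) (\<rho> DX) (\<rho> Y) (\<rho> DY)"
      by (simp add: rule_fun_def)
    then show "rat_algebra.trm_eval \<rho> P = rat_algebra.trm_eval \<rho> (simple_rule \<alpha> \<beta> \<gamma>)"
      by (simp add: form simple_rule_def algebra_simps)
  qed
  ultimately show ?thesis
    by (auto simp: simple_iff_simple_rule)
qed

theorem mainTheorem2:
  fixes P :: prule
  shows "BAC (pprod P :: ('a::finite) series \<Rightarrow> 'a series \<Rightarrow> 'a series) \<longleftrightarrow> simple P"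
  using simple_imp_BAC BAC_imp_simple by blast

end
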